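(* Let $G=(V,F,E)$ be a factor tree, i.e. a connected bipartite graph without cycles whose vertices are partitioned into variable nodes $V$ and factor nodes $F$, with every edge joining a variable node to a factor node. For $j\in V$ let $N(j)\subset F$ be its neighbouring factor nodes and $N_j=|N(j)|$; for $\alpha\in F$ let $N(\alpha)\subset V$ be its neighbouring variable nodes. Choose real numbers $c_\alpha>0$ for $\alpha\in F$ and $c_j\ge 0$ for $j\in V$ such that $\sum_{j\in V}c_j+\sum_{\alpha\in F}c_\alpha=1$. For every edge $(j,\alpha)\in E$ with $j\in V$, $\alpha\in F$, removing this edge splits $G$ into two trees; let $G_{1,j\alpha}=(V_{1,j\alpha},F_{1,j\alpha},E_{1,j\alpha})$ be the one containing $j$, and define $$c_{j\alpha}=\sum_{i\in V_{1,j\alpha}}c_i+\sum_{\beta\in F_{1,j\alpha}}c_\beta.$$ Then $c_\alpha>0$, $c_j\ge 0$, $c_{j\alpha}\ge 0$ for all $j\in V$, $\alpha\in F$, and $$c_j-\sum_{\alpha\in N(j)}c_{j\alpha}=1-N_j\quad\text{for all }j\in V,\qquad c_\alpha+\sum_{j\in N(\alpha)}c_{j\alpha}=1\quad\text{for all }\alpha\in F.$$ *)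

theory Defs
  imports Complex_Main
begin

definition fnodes :: "'v set \<Rightarrow> 'f set \<Rightarrow> ('v + 'f) set" where
  "fnodes V F = Inl ` V \<union> Inr ` F"

definition fadj :: "('v \<times> 'f) set \<Rightarrow> ('v + 'f) \<Rightarrow> ('v + 'f) \<Rightarrow> bool" where
  "fadj E x y \<longleftrightarrow> (\<exists>j a. (j, a) \<in> E \<and>
      ((x = Inl j \<and> y = Inr a) \<or> (x = Inr a \<and> y = Inl j)))"

definition fconnected :: "'v set \<Rightarrow> 'f set \<Rightarrow> ('v \<times> 'f) set \<Rightarrow> bool" where
  "fconnected V F E \<longleftrightarrow> (\<forall>x\<in>fnodes V F. \<forall>y\<in>fnodes V F. (fadj E)\<^sup>*\<^sup>* x y)"

definition has_cycle :: "('v \<times> 'f) set \<Rightarrow> bool" where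
  "has_cycle E \<longleftrightarrow> (\<exists>xs. length xs \<ge> 3 \<and> distinct xs \<and>
      (\<forall>i < length xs. fadj E (xs ! i) (xs ! ((i + 1) mod length xs))))"

definition factor_tree :: "'v set \<Rightarrow> 'f set \<Rightarrow> ('v \<times> 'f) set \<Rightarrow> bool" where
  "factor_tree V F E \<longleftrightarrow> finite V \<and> finite F \<and> E \<subseteq> V \<times> F \<and>
      fconnected V F E \<and> \<not> has_cycle E"

definition comp1 :: "('v \<times> 'f) set \<Rightarrow> 'v \<Rightarrow> 'f \<Rightarrow> ('v + 'f) set" where
  "comp1 E j a = {x. (fadj (E - {(j, a)}))\<^sup>*\<^sup>* (Inl j) x}"

definition c_edge :: "'v set \<Rightarrow> 'f set \<Rightarrow> ('v \<times> 'f) set \<Rightarrow> ('v \<Rightarrow> real) \<Rightarrow> ('f \<Rightarrow> real)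
    \<Rightarrow> 'v \<Rightarrow> 'f \<Rightarrow> real" where
  "c_edge V F E cV cF j a =
     (\<Sum>i\<in>{i\<in>V. Inl i \<in> comp1 E j a}. cV i) + (\<Sum>b\<in>{b\<in>F. Inr b \<in> comp1 E j a}. cF b)"

definition nbr_v :: "('v \<times> 'f) set \<Rightarrow> 'v \<Rightarrow> 'f set" where
  "nbr_v E j = {a. (j, a) \<in> E}"

definition nbr_f :: "('v \<times> 'f) set \<Rightarrow> 'f \<Rightarrow> 'v set" where
  "nbr_f E a = {j. (j, a) \<in> E}"

end

(* Deleting the edge {j, \<alpha>} splits the tree into G_{1,j\<alpha>} and the side of \<alpha>, so c_{j\<alpha>} is
   1 minus the weight of the \<alpha>-side. Deleting a node x splits the tree into one branch per
   neighbour of x, so the total weight 1 is c_x plus the weights of these branches. At a factor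
   \<alpha> the branches are the G_{1,j\<alpha>}, which gives c_\<alpha> + \<Sum> c_{j\<alpha>} = 1; at a variable j they
   are the \<alpha>-sides, which gives c_j + \<Sum> (1 - c_{j\<alpha>}) = 1. *)

theory Submission
  imports Defs "HOL-Library.Transitive_Closure_Table"
begin

definition del_edge :: "('n \<Rightarrow> 'n \<Rightarrow> bool) \<Rightarrow> 'n \<Rightarrow> 'n \<Rightarrow> 'n \<Rightarrow> 'n \<Rightarrow> bool" where
  "del_edge A x y u v \<longleftrightarrow> A u v \<and> {u, v} \<noteq> {x, y}"

text \<open>The side of y after deleting the edge {x, y}; the paper's G_{1,j\<alpha>} is
  branch (fadj E) (Inr \<alpha>) (Inl j).\<close>

definition branch :: "('n \<Rightarrow> 'n \<Rightarrow> bool) \<Rightarrow> 'n \<Rightarrow> 'n \<Rightarrow> 'n set" where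
  "branch A x y = {z. (del_edge A x y)\<^sup>*\<^sup>* y z}"

lemma del_edge_commute: "del_edge A x y = del_edge A y x"
  unfolding del_edge_def by (intro ext) (simp add: insert_commute)

lemma branch_closed: "z \<in> branch A x y \<Longrightarrow> del_edge A x y z w \<Longrightarrow> w \<in> branch A x y"
  unfolding branch_def by (blast intro: rtranclp.rtrancl_into_rtrancl)

lemma cycle_of_bypassed_edge:
  assumes "x \<noteq> y" and "A x y" and "(del_edge A x y)\<^sup>*\<^sup>* y x"
  shows "\<exists>xs. length xs \<ge> 3 \<and> distinct xs \<and>
    (\<forall>i < length xs. A (xs ! i) (xs ! ((i + 1) mod length xs)))"
proof -
  let ?D = "del_edge A x y"
  obtain ps where "rtrancl_path ?D y ps x"
    using assms(3) rtranclp_eq_rtrancl_path by metis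
  then obtain ps' where path: "rtrancl_path ?D y ps' x" and dist: "distinct (y # ps')"
    using rtrancl_path_distinct by metis
  have "ps' \<noteq> []"
    using path \<open>x \<noteq> y\<close> by (auto elim: rtrancl_path.cases)
  then have last: "last ps' = x"
    using path rtrancl_path_last by metis
  have "ps' \<noteq> [x]"
  proof
    assume "ps' = [x]"
    then have "?D y x"
      using rtrancl_path_nth[OF path, of 0] by simp
    then show False
      by (simp add: del_edge_def insert_commute)
  qed
  with \<open>ps' \<noteq> []\<close> last have len: "length ps' \<ge> 2"
    by (cases ps' rule: rev_cases) (auto simp: Suc_le_eq)
  define cyc where "cyc = y # ps'"
  have "A (cyc ! i) (cyc ! ((i + 1) mod length cyc))" if "i < length cyc" for i
  proof (cases "i < length ps'")
    case True
    then show ?thesis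
      using rtrancl_path_nth[OF path True] by (simp add: cyc_def del_edge_def)
  next
    case False
    then have "i = length ps'" using that by (simp add: cyc_def)
    then show ?thesis
      using last \<open>ps' \<noteq> []\<close> \<open>A x y\<close> by (simp add: cyc_def last_conv_nth)
  qed
  moreover have "length cyc \<ge> 3" "distinct cyc"
    using len dist by (simp_all add: cyc_def)
  ultimately show ?thesis by blast
qed

locale finite_tree =
  fixes N :: "'n set" and A :: "'n \<Rightarrow> 'n \<Rightarrow> bool"
  assumes finite_nodes: "finite N"
    and adj_sym: "A u v \<Longrightarrow> A v u"
    and adj_nodes_left: "A u v \<Longrightarrow> u \<in> N"
    and connected: "x \<in> N \<Longrightarrow> y \<in> N \<Longrightarrow> A\<^sup>*\<^sup>* x y"
    and edge_bridge: "A x y \<Longrightarrow> \<not> (del_edge A x y)\<^sup>*\<^sup>* y x"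
begin

lemma adj_nodes_right: "A u v \<Longrightarrow> v \<in> N"
  using adj_nodes_left adj_sym by blast

lemma adj_irrefl: "\<not> A x x"
  using edge_bridge by blast

lemma del_edge_rtranclp_sym:
  assumes "(del_edge A x y)\<^sup>*\<^sup>* u v"
  shows "(del_edge A x y)\<^sup>*\<^sup>* v u"
proof -
  have "symp (del_edge A x y)"
    by (rule sympI) (simp add: del_edge_def insert_commute adj_sym)
  then have "symp (del_edge A x y)\<^sup>*\<^sup>*"
    by (rule symp_rtranclp)
  then show ?thesis
    using assms by (rule sympD)
qed

lemma branch_subset_nodes:
  assumes "y \<in> N"
  shows "branch A x y \<subseteq> N"
proof
  fix z assume "z \<in> branch A x y"
  then have "(del_edge A x y)\<^sup>*\<^sup>* y z" by (simp add: branch_def)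
  then show "z \<in> N"
    by induction (use assms adj_nodes_right in \<open>auto simp: del_edge_def\<close>)
qed

lemma finite_branch: "y \<in> N \<Longrightarrow> finite (branch A x y)"
  using branch_subset_nodes finite_nodes finite_subset by blast

lemma not_in_branch: "A x y \<Longrightarrow> x \<notin> branch A x y"
  using edge_bridge by (simp add: branch_def)

text \<open>Unlike the definition, this description of a branch at x does not depend on the deleted
  edge, which makes different branches at x comparable.\<close>

lemma branch_eq_avoiding:
  assumes "A x y"
  shows "branch A x y = {z. (\<lambda>u v. A u v \<and> u \<noteq> x \<and> v \<noteq> x)\<^sup>*\<^sup>* y z}"
proof (intro set_eqI iffI)
  fix z assume "z \<in> branch A x y"
  then have "(del_edge A x y)\<^sup>*\<^sup>* y z" by (simp add: branch_def)
  then have "(\<lambda>u v. A u v \<and> u \<noteq> x \<and> v \<noteq> x)\<^sup>*\<^sup>* y z"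
  proof induction
    case (step u v)
    have u: "u \<in> branch A x y"
      using step.hyps(1) by (simp add: branch_def)
    from u step.hyps(2) have v: "v \<in> branch A x y"
      by (rule branch_closed)
    from u v have "u \<noteq> x" "v \<noteq> x"
      using not_in_branch[OF assms] by auto
    with step.hyps(2) have "A u v \<and> u \<noteq> x \<and> v \<noteq> x"
      by (simp add: del_edge_def)
    with step.IH show ?case
      by (rule rtranclp.rtrancl_into_rtrancl)
  qed simp
  then show "z \<in> {z. (\<lambda>u v. A u v \<and> u \<noteq> x \<and> v \<noteq> x)\<^sup>*\<^sup>* y z}"
    by simp
next
  fix z assume "z \<in> {z. (\<lambda>u v. A u v \<and> u \<noteq> x \<and> v \<noteq> x)\<^sup>*\<^sup>* y z}"
  moreover have "(\<lambda>u v. A u v \<and> u \<noteq> x \<and> v \<noteq> x) \<le> del_edge A x y"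
    by (auto simp: del_edge_def doubleton_eq_iff)
  ultimately show "z \<in> branch A x y"
    unfolding branch_def using rtranclp_mono by blast
qed

lemma branches_disjoint:
  assumes "A x y" "A x y'" "y \<noteq> y'"
  shows "branch A x y \<inter> branch A x y' = {}"
proof (rule ccontr)
  let ?Q = "\<lambda>u v. A u v \<and> u \<noteq> x \<and> v \<noteq> x"
  assume "branch A x y \<inter> branch A x y' \<noteq> {}"
  then obtain z where yz: "?Q\<^sup>*\<^sup>* y z" and y'z: "?Q\<^sup>*\<^sup>* y' z"
    using assms(1,2) by (auto simp: branch_eq_avoiding)
  have "symp ?Q"
    by (auto intro!: sympI adj_sym)
  then have "symp ?Q\<^sup>*\<^sup>*"
    by (rule symp_rtranclp)
  then have "?Q\<^sup>*\<^sup>* z y'"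
    using y'z by (rule sympD)
  with yz have "?Q\<^sup>*\<^sup>* y y'"
    by (rule rtranclp_trans)
  then have "y' \<in> branch A x y"
    using assms(1) by (simp add: branch_eq_avoiding)
  moreover have "y' \<noteq> x"
    using assms(2) adj_irrefl by blast
  then have "del_edge A x y y' x"
    using assms by (simp add: del_edge_def doubleton_eq_iff adj_sym)
  ultimately have "x \<in> branch A x y"
    by (rule branch_closed)
  then show False
    using not_in_branch[OF assms(1)] by simp
qed

lemma nodes_eq_star:
  assumes "x \<in> N"
  shows "N = insert x (\<Union>y\<in>{y. A x y}. branch A x y)"
proof
  have reach: "z = x \<or> (\<exists>y. A x y \<and> z \<in> branch A x y)" if "A\<^sup>*\<^sup>* x z" for z
    using that
  proof induction
    case (step u v)
    show ?case
    proof (cases "u = x")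
      case True
      moreover have "v \<in> branch A x v"
        by (simp add: branch_def)
      ultimately show ?thesis
        using step.hyps(2) by blast
    next
      case False
      then obtain y where y: "A x y" "u \<in> branch A x y"
        using step.IH by blast
      have "v = x \<or> del_edge A x y u v"
        using False step.hyps(2) by (auto simp: del_edge_def doubleton_eq_iff)
      then show ?thesis
        using y branch_closed[OF y(2)] by blast
    qed
  qed simp
  show "N \<subseteq> insert x (\<Union>y\<in>{y. A x y}. branch A x y)"
  proof
    fix z assume "z \<in> N"
    then show "z \<in> insert x (\<Union>y\<in>{y. A x y}. branch A x y)"
      using reach[OF connected[OF assms]] by blast
  qed
  show "insert x (\<Union>y\<in>{y. A x y}. branch A x y) \<subseteq> N"
    using assms branch_subset_nodes adj_nodes_right by (auto simp: UN_subset_iff)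
qed

lemma sum_nodes_star:
  fixes w :: "'n \<Rightarrow> 'a::comm_monoid_add"
  assumes "x \<in> N"
  shows "sum w N = w x + (\<Sum>y | A x y. sum w (branch A x y))"
proof -
  let ?U = "\<Union>y\<in>{y. A x y}. branch A x y"
  have nbrs: "{y. A x y} \<subseteq> N"
    using adj_nodes_right by blast
  then have fin_nbrs: "finite {y. A x y}"
    using finite_nodes by (rule finite_subset)
  have fin_branches: "\<forall>y\<in>{y. A x y}. finite (branch A x y)"
    using nbrs finite_branch by blast
  have "sum w N = sum w (insert x ?U)"
    using nodes_eq_star[OF assms] by simp
  also have "\<dots> = w x + sum w ?U"
    using fin_nbrs fin_branches not_in_branch by (intro sum.insert) auto
  also have "sum w ?U = (\<Sum>y | A x y. sum w (branch A x y))"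
    using fin_nbrs fin_branches branches_disjoint by (intro sum.UNION_disjoint) auto
  finally show ?thesis .
qed

lemma nodes_eq_edge:
  assumes "A x y"
  shows "N = branch A y x \<union> branch A x y"
proof
  let ?D = "del_edge A x y"
  have nodes: "x \<in> N" "y \<in> N"
    using assms adj_nodes_left adj_nodes_right by blast+
  have "?D\<^sup>*\<^sup>* x z \<or> ?D\<^sup>*\<^sup>* y z" if "A\<^sup>*\<^sup>* x z" for z
    using that
  proof induction
    case (step u v)
    show ?case
    proof (cases "{u, v} = {x, y}")
      case True
      then have "v = x \<or> v = y"
        by (auto simp: doubleton_eq_iff)
      then show ?thesis by auto
    next
      case False
      with step.hyps(2) have "?D u v"
        by (simp add: del_edge_def)
      with step.IH show ?thesis
        by (meson rtranclp.rtrancl_into_rtrancl)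
    qed
  qed simp
  then show "N \<subseteq> branch A y x \<union> branch A x y"
    using connected nodes(1) by (auto simp: branch_def del_edge_commute[of A y x])
  show "branch A y x \<union> branch A x y \<subseteq> N"
    using nodes branch_subset_nodes by blast
qed

lemma branches_of_edge_disjoint:
  assumes "A x y"
  shows "branch A y x \<inter> branch A x y = {}"
proof -
  have "\<not> (del_edge A x y)\<^sup>*\<^sup>* y z" if "(del_edge A x y)\<^sup>*\<^sup>* x z" for z
  proof
    assume "(del_edge A x y)\<^sup>*\<^sup>* y z"
    moreover have "(del_edge A x y)\<^sup>*\<^sup>* z x"
      using that by (rule del_edge_rtranclp_sym)
    ultimately show False
      using edge_bridge[OF assms] by (meson rtranclp_trans)
  qed
  then show ?thesis
    by (auto simp: branch_def del_edge_commute[of A y x])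
qed

lemma sum_nodes_edge:
  fixes w :: "'n \<Rightarrow> 'a::comm_monoid_add"
  assumes "A x y"
  shows "sum w N = sum w (branch A y x) + sum w (branch A x y)"
proof -
  have "x \<in> N" "y \<in> N"
    using assms adj_nodes_left adj_nodes_right by blast+
  then show ?thesis
    by (subst nodes_eq_edge[OF assms])
      (intro sum.union_disjoint finite_branch branches_of_edge_disjoint assms)
qed

end

lemma fadj_sym: "fadj E u v \<Longrightarrow> fadj E v u"
  unfolding fadj_def by blast

lemma fadj_irrefl: "\<not> fadj E u u"
  unfolding fadj_def by auto

lemma fadj_Inl: "{y. fadj E (Inl j) y} = Inr ` nbr_v E j"
  unfolding fadj_def nbr_v_def by auto

lemma fadj_Inr: "{y. fadj E (Inr a) y} = Inl ` nbr_f E a"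
  unfolding fadj_def nbr_f_def by auto

lemma fadj_minus_edge:
  "(j, a) \<in> E \<Longrightarrow> fadj (E - {(j, a)}) = del_edge (fadj E) (Inl j) (Inr a)"
  unfolding fadj_def del_edge_def by (intro ext) (auto simp: doubleton_eq_iff)

lemma comp1_eq_branch: "(j, a) \<in> E \<Longrightarrow> comp1 E j a = branch (fadj E) (Inr a) (Inl j)"
  by (simp add: comp1_def branch_def fadj_minus_edge del_edge_commute[of "fadj E" "Inr a"])

lemma finite_tree_fadj:
  assumes "factor_tree V F E"
  shows "finite_tree (fnodes V F) (fadj E)"
proof
  show "finite (fnodes V F)"
    using assms by (simp add: factor_tree_def fnodes_def)
  show "fadj E u v \<Longrightarrow> fadj E v u" for u v
    by (rule fadj_sym)
  show "fadj E u v \<Longrightarrow> u \<in> fnodes V F" for u v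
    using assms by (auto simp: factor_tree_def fadj_def fnodes_def)
  show "(fadj E)\<^sup>*\<^sup>* x y" if "x \<in> fnodes V F" "y \<in> fnodes V F" for x y
    using assms that unfolding factor_tree_def fconnected_def by blast
  show "\<not> (del_edge (fadj E) x y)\<^sup>*\<^sup>* y x" if "fadj E x y" for x y
  proof
    assume bypass: "(del_edge (fadj E) x y)\<^sup>*\<^sup>* y x"
    have "x \<noteq> y"
      using that fadj_irrefl by metis
    then have "has_cycle E"
      unfolding has_cycle_def using that bypass by (rule cycle_of_bypassed_edge)
    then show False
      using assms by (simp add: factor_tree_def)
  qed
qed

lemma sum_case_sum_fnodes:
  assumes "finite V" "finite F" "C \<subseteq> fnodes V F"
  shows "sum (case_sum cV cF) C =
    (\<Sum>i\<in>{i\<in>V. Inl i \<in> C}. cV i) + (\<Sum>b\<in>{b\<in>F. Inr b \<in> C}. cF b)"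
proof -
  have "C = {i\<in>V. Inl i \<in> C} <+> {b\<in>F. Inr b \<in> C}"
    using assms(3) by (auto simp: fnodes_def)
  then have "sum (case_sum cV cF) C = sum (case_sum cV cF) ({i\<in>V. Inl i \<in> C} <+> {b\<in>F. Inr b \<in> C})"
    by (rule arg_cong)
  also have "\<dots> = (\<Sum>i\<in>{i\<in>V. Inl i \<in> C}. cV i) + (\<Sum>b\<in>{b\<in>F. Inr b \<in> C}. cF b)"
    using assms(1,2) by (simp add: sum.Plus comp_def)
  finally show ?thesis .
qed

lemma c_edge_nonneg:
  assumes "\<forall>a\<in>F. cF a \<ge> 0" "\<forall>j\<in>V. cV j \<ge> 0"
  shows "c_edge V F E cV cF j a \<ge> 0"
  using assms unfolding c_edge_def by (auto intro!: add_nonneg_nonneg sum_nonneg)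

lemma c_edge_eq_branch_sum:
  assumes "factor_tree V F E" "(j, a) \<in> E"
  shows "c_edge V F E cV cF j a = sum (case_sum cV cF) (branch (fadj E) (Inr a) (Inl j))"
proof -
  interpret finite_tree "fnodes V F" "fadj E"
    using assms(1) by (rule finite_tree_fadj)
  have "Inl j \<in> fnodes V F"
    using assms by (auto simp: factor_tree_def fnodes_def)
  then have "branch (fadj E) (Inr a) (Inl j) \<subseteq> fnodes V F"
    by (rule branch_subset_nodes)
  moreover have "finite V" "finite F"
    using assms(1) by (simp_all add: factor_tree_def)
  ultimately show ?thesis
    using assms(2) by (simp add: c_edge_def comp1_eq_branch sum_case_sum_fnodes)
qed

lemma sum_fnodes:
  assumes "finite V" "finite F"
  shows "sum (case_sum cV cF) (fnodes V F) = sum cV V + sum cF F"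
proof -
  have "{i\<in>V. Inl i \<in> fnodes V F} = V" "{b\<in>F. Inr b \<in> fnodes V F} = F"
    by (auto simp: fnodes_def)
  then show ?thesis
    using sum_case_sum_fnodes[OF assms subset_refl, of cV cF] by simp
qed

lemma c_edge_factor_sum:
  assumes tree: "factor_tree V F E" and total: "(\<Sum>j\<in>V. cV j) + (\<Sum>a\<in>F. cF a) = 1"
    and "a \<in> F"
  shows "cF a + (\<Sum>j\<in>nbr_f E a. c_edge V F E cV cF j a) = 1"
proof -
  interpret finite_tree "fnodes V F" "fadj E"
    using tree by (rule finite_tree_fadj)
  let ?w = "case_sum cV cF"
  have "finite V" "finite F"
    using tree by (simp_all add: factor_tree_def)
  then have total_w: "sum ?w (fnodes V F) = 1"
    using total by (simp add: sum_fnodes)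
  have "Inr a \<in> fnodes V F"
    using \<open>a \<in> F\<close> by (simp add: fnodes_def)
  from sum_nodes_star[OF this, of ?w]
  have "sum ?w (fnodes V F) = cF a + (\<Sum>y | fadj E (Inr a) y. sum ?w (branch (fadj E) (Inr a) y))"
    by (simp only: sum.case)
  then have "1 = cF a + (\<Sum>y | fadj E (Inr a) y. sum ?w (branch (fadj E) (Inr a) y))"
    using total_w by simp
  also have "\<dots> = cF a + (\<Sum>j\<in>nbr_f E a. sum ?w (branch (fadj E) (Inr a) (Inl j)))"
    by (simp add: fadj_Inr sum.reindex)
  also have "\<dots> = cF a + (\<Sum>j\<in>nbr_f E a. c_edge V F E cV cF j a)"
    using c_edge_eq_branch_sum[OF tree] by (simp add: nbr_f_def)
  finally show ?thesis ..
qed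

lemma c_edge_variable_sum:
  assumes tree: "factor_tree V F E" and total: "(\<Sum>j\<in>V. cV j) + (\<Sum>a\<in>F. cF a) = 1"
    and "j \<in> V"
  shows "cV j - (\<Sum>a\<in>nbr_v E j. c_edge V F E cV cF j a) = 1 - real (card (nbr_v E j))"
proof -
  interpret finite_tree "fnodes V F" "fadj E"
    using tree by (rule finite_tree_fadj)
  let ?w = "case_sum cV cF"
  let ?far = "\<lambda>a. sum ?w (branch (fadj E) (Inl j) (Inr a))"
  have "finite V" "finite F"
    using tree by (simp_all add: factor_tree_def)
  then have total_w: "sum ?w (fnodes V F) = 1"
    using total by (simp add: sum_fnodes)
  have "Inl j \<in> fnodes V F"
    using \<open>j \<in> V\<close> by (simp add: fnodes_def)
  from sum_nodes_star[OF this, of ?w]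
  have "sum ?w (fnodes V F) = cV j + (\<Sum>y | fadj E (Inl j) y. sum ?w (branch (fadj E) (Inl j) y))"
    by (simp only: sum.case)
  then have "1 = cV j + (\<Sum>y | fadj E (Inl j) y. sum ?w (branch (fadj E) (Inl j) y))"
    using total_w by simp
  also have "\<dots> = cV j + (\<Sum>a\<in>nbr_v E j. ?far a)"
    by (simp add: fadj_Inl sum.reindex)
  finally have star: "1 = cV j + (\<Sum>a\<in>nbr_v E j. ?far a)" .
  have "c_edge V F E cV cF j a = 1 - ?far a" if "a \<in> nbr_v E j" for a
  proof -
    have "(j, a) \<in> E"
      using that by (simp add: nbr_v_def)
    then have "fadj E (Inl j) (Inr a)"
      by (auto simp: fadj_def)
    then have "1 = c_edge V F E cV cF j a + ?far a"
      using sum_nodes_edge[of "Inl j" "Inr a" ?w] total_w c_edge_eq_branch_sum[OF tree \<open>(j, a) \<in> E\<close>]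
      by simp
    then show ?thesis
      by simp
  qed
  then have "(\<Sum>a\<in>nbr_v E j. c_edge V F E cV cF j a) = (\<Sum>a\<in>nbr_v E j. 1 - ?far a)"
    by (rule sum.cong[OF refl])
  also have "\<dots> = real (card (nbr_v E j)) - (\<Sum>a\<in>nbr_v E j. ?far a)"
    by (simp add: sum_subtractf)
  finally show ?thesis
    using star by simp
qed

theorem proposition1:
  fixes V :: "'v set" and F :: "'f set" and E :: "('v \<times> 'f) set"
    and cV :: "'v \<Rightarrow> real" and cF :: "'f \<Rightarrow> real"
  assumes "factor_tree V F E"
    and "\<forall>a\<in>F. cF a > 0"
    and "\<forall>j\<in>V. cV j \<ge> 0"
    and "(\<Sum>j\<in>V. cV j) + (\<Sum>a\<in>F. cF a) = 1"
  shows "(\<forall>a\<in>F. cF a > 0) \<and> (\<forall>j\<in>V. cV j \<ge> 0)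
    \<and> (\<forall>(j, a)\<in>E. c_edge V F E cV cF j a \<ge> 0)
    \<and> (\<forall>j\<in>V. cV j - (\<Sum>a\<in>nbr_v E j. c_edge V F E cV cF j a) = 1 - real (card (nbr_v E j)))
    \<and> (\<forall>a\<in>F. cF a + (\<Sum>j\<in>nbr_f E a. c_edge V F E cV cF j a) = 1)"
proof -
  have "\<forall>a\<in>F. cF a \<ge> 0"
    using assms(2) by (simp add: less_imp_le)
  then show ?thesis
    using assms(2,3) c_edge_nonneg c_edge_variable_sum[OF assms(1,4)] c_edge_factor_sum[OF assms(1,4)]
    by auto
qed

end
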